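(* For every $\alpha \in (0,1)$ there exist constants $c_\alpha , d_\alpha > 0$ such that \[ R^{2\alpha}\, \hat{\varphi_\alpha}\!\left(1-\frac{y}{R}\right) \leq d_\alpha\, y^{2\alpha} \] for every $R>0$ and $y> 0$, and \[ \lim_{R\to \infty} R^{2\alpha}\, \hat{\varphi_\alpha}\!\left(1-\frac{y}{R}\right) = c_\alpha\, y^{2\alpha} \] for every $y > 0$. Moreover, $c_\alpha$ depends continuously on $\alpha\in(0,1)$.
   Context: Fourier transform convention: $\hat f(y)=\frac{1}{\sqrt{2\pi}}\int_{\mathbb{R}} f(x)e^{-iyx}\,dx$. $J_\alpha$ is the Bessel function of the first kind of order $\alpha$, and $\varphi_\alpha(x)=J_\alpha(x/2)^2/x^{2\alpha}$, an even entire function which for $\alpha>0$ is integrable with Fourier transform supported in $[-1,1]$. *)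

theory Defs
  imports "HOL-Analysis.Analysis"
begin

text \<open>Bessel function of the first kind of real order a, for x > 0, via its power series.\<close>
definition besselJ :: "real \<Rightarrow> real \<Rightarrow> real" where
  "besselJ a x = (\<Sum>m. (-1) ^ m / (fact m * Gamma (real m + a + 1)) * (x / 2) powr (2 * real m + a))"

text \<open>phi_a(x) = J_a(x/2)^2 / x^(2a), extended evenly to x < 0 and by continuity to x = 0.\<close>
definition phi :: "real \<Rightarrow> real \<Rightarrow> real" where
  "phi a x = (if x = 0 then 1 / (4 powr (2 * a) * (Gamma (a + 1))\<^sup>2)
              else (besselJ a (\<bar>x\<bar> / 2))\<^sup>2 / \<bar>x\<bar> powr (2 * a))"

definition fourier :: "(real \<Rightarrow> real) \<Rightarrow> real \<Rightarrow> complex" where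
  "fourier f y = complex_of_real (1 / sqrt (2 * pi)) *
     (LINT x|lborel. complex_of_real (f x) * exp (- \<i> * complex_of_real (y * x)))"

end

theory Submission
  imports Defs "HOL-Probability.Characteristic_Functions"
begin

text \<open>
  By Poisson's integral, \<open>J_a(x/2) = \<kappa>_a x^a E_a(x)\<close>, where \<open>E_a\<close> is the cosine transform of
  the weight \<open>w_a(r) = (1 - 4r^2)^(a - 1/2)\<close> on \<open>|r| < 1/2\<close>; hence \<open>\<phi>_a = \<kappa>_a^2 E_a^2\<close>.
  The convolution theorem and Fourier inversion (proved by Gaussian regularisation) show that
  the Fourier transform of \<open>\<phi>_a\<close> is \<open>\<surd>(2\<pi>) \<kappa>_a^2 (w_a * w_a)\<close>. The substitution \<open>r = 1/2 - (1-u)t\<close> shows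
  \<open>(w_a * w_a)(u) = 16^(a - 1/2) (1-u)^(2a) \<Phi>_a(u)\<close> for \<open>0 \<le> u < 1\<close>, with \<open>\<Phi>_a\<close> continuous
  and bounded on \<open>[0,1]\<close> and \<open>\<Phi>_a(1) = B(a + 1/2, a + 1/2)\<close>. Evaluating at \<open>u = 1 - y/R\<close>
  gives the bound, and the limit with \<open>c_a = \<surd>(2/\<pi>) / \<Gamma>(2a + 1)\<close>.
\<close>

section \<open>Fourier analysis on the real line\<close>

lemma integrable_lborel_pair_of_nn_iterated:
  fixes f :: "real \<Rightarrow> real \<Rightarrow> 'b::{banach, second_countable_topology}"
  assumes [measurable]: "(\<lambda>(x,y). f x y) \<in> borel_measurable (lborel \<Otimes>\<^sub>M lborel)"
    and fin: "(\<integral>\<^sup>+x. \<integral>\<^sup>+y. norm (f x y) \<partial>lborel \<partial>lborel) < \<infinity>"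
  shows "integrable (lborel \<Otimes>\<^sub>M lborel) (\<lambda>(x,y). f x y)"
proof (rule integrableI_bounded)
  have "(\<integral>\<^sup>+x. \<integral>\<^sup>+y. norm (f x y) \<partial>lborel \<partial>lborel)
      = (\<integral>\<^sup>+p. norm ((\<lambda>(x,y). f x y) p) \<partial>(lborel \<Otimes>\<^sub>M lborel))"
    by (subst lborel.nn_integral_fst[symmetric]) auto
  with fin show "(\<integral>\<^sup>+p. norm ((\<lambda>(x,y). f x y) p) \<partial>(lborel \<Otimes>\<^sub>M lborel)) < \<infinity>" by simp
qed simp

lemma lborel_integral_swap:
  fixes f :: "real \<Rightarrow> real \<Rightarrow> 'b::{banach, second_countable_topology}"
  assumes "(\<lambda>(x,y). f x y) \<in> borel_measurable (lborel \<Otimes>\<^sub>M lborel)"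
    and "(\<integral>\<^sup>+x. \<integral>\<^sup>+y. norm (f x y) \<partial>lborel \<partial>lborel) < \<infinity>"
  shows "(\<integral>y. (\<integral>x. f x y \<partial>lborel) \<partial>lborel) = (\<integral>x. (\<integral>y. f x y \<partial>lborel) \<partial>lborel)"
  by (rule lborel_pair.Fubini_integral[OF integrable_lborel_pair_of_nn_iterated[OF assms]])

lemma nn_integral_product_finite:
  fixes g h :: "real \<Rightarrow> real"
  assumes [measurable]: "g \<in> borel_measurable borel" "h \<in> borel_measurable borel"
    and "integrable lborel g" "integrable lborel h" "\<And>x. 0 \<le> g x" "\<And>x. 0 \<le> h x"
  shows "(\<integral>\<^sup>+x. \<integral>\<^sup>+u. ennreal (g x * h u) \<partial>lborel \<partial>lborel) < \<infinity>"
proof -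
  have "(\<integral>\<^sup>+x. \<integral>\<^sup>+u. ennreal (g x * h u) \<partial>lborel \<partial>lborel)
      = (\<integral>\<^sup>+x. ennreal (g x) * (\<integral>\<^sup>+u. ennreal (h u) \<partial>lborel) \<partial>lborel)"
    using assms(5,6) by (intro nn_integral_cong, subst nn_integral_cmult[symmetric])
      (auto simp: ennreal_mult intro!: nn_integral_cong)
  also have "\<dots> = (\<integral>\<^sup>+x. ennreal (g x) \<partial>lborel) * (\<integral>\<^sup>+u. ennreal (h u) \<partial>lborel)"
    by (rule nn_integral_multc) measurable
  also have "\<dots> < \<infinity>"
    using assms(3-6) unfolding integrable_iff_bounded by (simp add: ennreal_mult_less_top)
  finally show ?thesis .
qed

lemma iexp_add: "iexp (a + b) = iexp a * iexp b"
  by (simp add: distrib_left exp_add)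

lemma integral_gaussian: "(\<integral>x. exp (- x\<^sup>2 / 2) \<partial>lborel) = sqrt (2*pi)"
proof -
  have "(\<integral>x. std_normal_density x \<partial>lborel) = 1" by simp
  then have "(1 / sqrt (2*pi)) * (\<integral>x. exp (- x\<^sup>2 / 2) \<partial>lborel) = 1"
    by (simp only: std_normal_density_def integral_mult_right_zero)
  then show ?thesis by (metis divide_eq_1_iff mult_1 times_divide_eq_left)
qed

lemma integrable_gaussian_scaled:
  fixes \<sigma> :: real
  assumes "\<sigma> > 0"
  shows "integrable lborel (\<lambda>x. exp (- (\<sigma>*x)\<^sup>2 / 2))"
proof -
  have "integrable lborel (\<lambda>x. (sqrt (2*pi) / \<sigma>) * normal_density 0 (1/\<sigma>) x)"
    by (intro integrable_mult_right integrable_normal_density) (use assms in simp)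
  also have "(\<lambda>x. (sqrt (2*pi) / \<sigma>) * normal_density 0 (1/\<sigma>) x) = (\<lambda>x. exp (- (\<sigma>*x)\<^sup>2 / 2))"
  proof
    fix x
    have "sqrt (2 * pi * (1/\<sigma>)\<^sup>2) = sqrt (2*pi) / \<sigma>" using assms
      by (simp add: real_sqrt_mult power_divide real_sqrt_divide)
    then show "(sqrt (2*pi) / \<sigma>) * normal_density 0 (1/\<sigma>) x = exp (- (\<sigma>*x)\<^sup>2 / 2)"
      using assms by (simp add: normal_density_def power_divide power_mult_distrib)
  qed
  finally show ?thesis .
qed

lemma gaussian_fourier:
  "(\<integral>x. complex_of_real (exp (- x\<^sup>2 / 2)) * iexp (t * x) \<partial>lborel)
    = complex_of_real (sqrt (2*pi) * exp (- t\<^sup>2 / 2))"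
proof -
  have "char std_normal_distribution t = (\<integral>x. std_normal_density x *\<^sub>R iexp (t * x) \<partial>lborel)"
    unfolding char_def by (rule integral_density) auto
  also have "\<dots> = complex_of_real (1 / sqrt (2*pi))
      * (\<integral>x. complex_of_real (exp (- x\<^sup>2 / 2)) * iexp (t * x) \<partial>lborel)"
    by (simp add: std_normal_density_def scaleR_conv_of_real mult.assoc)
  finally show ?thesis
    by (simp add: char_std_normal_distribution field_simps)
qed

lemma gaussian_fourier_scaled:
  fixes \<sigma> :: real
  assumes "\<sigma> > 0"
  shows "(\<integral>x. complex_of_real (exp (- (\<sigma>*x)\<^sup>2 / 2)) * iexp (x * v) \<partial>lborel)
    = complex_of_real (sqrt (2*pi) / \<sigma> * exp (- (v/\<sigma>)\<^sup>2 / 2))"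
proof -
  have "(\<integral>x. complex_of_real (exp (- (\<sigma>*x)\<^sup>2 / 2)) * iexp (x * v) \<partial>lborel)
      = \<bar>1/\<sigma>\<bar> *\<^sub>R (\<integral>x. complex_of_real (exp (- (\<sigma>*(0 + 1/\<sigma>*x))\<^sup>2 / 2))
                        * iexp ((0 + 1/\<sigma>*x) * v) \<partial>lborel)"
    by (rule lborel_integral_real_affine) (use assms in simp)
  also have "(\<lambda>x. complex_of_real (exp (- (\<sigma>*(0 + 1/\<sigma>*x))\<^sup>2 / 2)) * iexp ((0 + 1/\<sigma>*x) * v))
      = (\<lambda>x. complex_of_real (exp (- x\<^sup>2 / 2)) * iexp ((v/\<sigma>) * x))"
    using assms by (auto simp: fun_eq_iff field_simps)
  also note gaussian_fourier
  finally show ?thesis using assms by (simp add: scaleR_conv_of_real field_simps)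
qed

lemma integral_gaussian_kernel_rescale:
  fixes H :: "real \<Rightarrow> real" and \<sigma> :: real
  assumes \<sigma>: "\<sigma> > 0"
  shows "(\<integral>u. H u * (sqrt (2*pi) / \<sigma> * exp (- ((u - \<xi>)/\<sigma>)\<^sup>2 / 2)) \<partial>lborel)
    = sqrt (2*pi) * (\<integral>z. H (\<xi> + \<sigma>*z) * exp (- z\<^sup>2/2) \<partial>lborel)"
proof -
  have "(\<integral>u. H u * (sqrt (2*pi) / \<sigma> * exp (- ((u - \<xi>)/\<sigma>)\<^sup>2 / 2)) \<partial>lborel)
      = \<bar>\<sigma>\<bar> *\<^sub>R (\<integral>z. H (\<xi> + \<sigma>*z) * (sqrt (2*pi) / \<sigma> * exp (- ((\<xi> + \<sigma>*z - \<xi>)/\<sigma>)\<^sup>2 / 2)) \<partial>lborel)"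
    by (rule lborel_integral_real_affine) (use \<sigma> in simp)
  also have "(\<lambda>z. H (\<xi> + \<sigma>*z) * (sqrt (2*pi) / \<sigma> * exp (- ((\<xi> + \<sigma>*z - \<xi>)/\<sigma>)\<^sup>2 / 2)))
      = (\<lambda>z. (sqrt (2*pi) / \<sigma>) * (H (\<xi> + \<sigma>*z) * exp (- z\<^sup>2 / 2)))"
    using \<sigma> by (auto simp: fun_eq_iff)
  also have "\<bar>\<sigma>\<bar> *\<^sub>R (\<integral>z. (sqrt (2*pi) / \<sigma>) * (H (\<xi> + \<sigma>*z) * exp (- z\<^sup>2 / 2)) \<partial>lborel)
      = sqrt (2*pi) * (\<integral>z. H (\<xi> + \<sigma>*z) * exp (- z\<^sup>2/2) \<partial>lborel)"
    using \<sigma> by (simp del: integral_mult_right integral_mult_right_zero add: integral_mult_right_zero)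
  finally show ?thesis .
qed

lemma gaussian_regularized_fourier:
  fixes H :: "real \<Rightarrow> real" and S :: "real \<Rightarrow> complex"
  assumes [measurable]: "H \<in> borel_measurable borel"
    and H_int: "integrable lborel H" and H_nonneg: "\<And>u. 0 \<le> H u"
    and S: "\<And>x. S x = (\<integral>u. complex_of_real (H u) * iexp (x * u) \<partial>lborel)"
    and \<sigma>: "\<sigma> > 0"
  shows "(\<integral>x. S x * complex_of_real (exp (- (\<sigma>*x)\<^sup>2/2)) * iexp (- (\<xi> * x)) \<partial>lborel)
       = complex_of_real (sqrt (2*pi) * (\<integral>z. H (\<xi> + \<sigma>*z) * exp (- z\<^sup>2/2) \<partial>lborel))"
proof -
  define G where "G x = exp (- (\<sigma>*x)\<^sup>2/2)" for x
  have [measurable]: "G \<in> borel_measurable borel" unfolding G_def by measurable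
  define F where "F x u = complex_of_real (H u) * complex_of_real (G x) * iexp (x * (u - \<xi>))" for x u
  have S_F: "S x * complex_of_real (G x) * iexp (- (\<xi> * x)) = (\<integral>u. F x u \<partial>lborel)" for x
  proof -
    have "S x * complex_of_real (G x) * iexp (- (\<xi> * x))
        = (\<integral>u. complex_of_real (H u) * iexp (x * u) * (complex_of_real (G x) * iexp (- (\<xi> * x))) \<partial>lborel)"
      unfolding S mult.assoc[of _ "complex_of_real (G x)"] by (rule integral_mult_left_zero[symmetric])
    also have "\<dots> = (\<integral>u. F x u \<partial>lborel)"
    proof (intro Bochner_Integration.integral_cong refl)
      fix u
      have "x * u + - (\<xi> * x) = x * (u - \<xi>)" by (simp add: algebra_simps)
      then have "iexp (x * u) * iexp (- (\<xi> * x)) = iexp (x * (u - \<xi>))"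
        by (metis iexp_add)
      then show "complex_of_real (H u) * iexp (x * u) * (complex_of_real (G x) * iexp (- (\<xi> * x))) = F x u"
        unfolding F_def by (metis (no_types, lifting) mult.assoc mult.commute)
    qed
    finally show ?thesis .
  qed
  have F_meas: "(\<lambda>(x,u). F x u) \<in> borel_measurable (lborel \<Otimes>\<^sub>M lborel)"
    unfolding F_def by measurable
  have "(\<integral>\<^sup>+x. \<integral>\<^sup>+u. ennreal (G x * H u) \<partial>lborel \<partial>lborel) < \<infinity>"
    using integrable_gaussian_scaled[OF \<sigma>] H_int H_nonneg
    by (intro nn_integral_product_finite) (auto simp: G_def)
  then have F_fin: "(\<integral>\<^sup>+x. \<integral>\<^sup>+u. norm (F x u) \<partial>lborel \<partial>lborel) < \<infinity>"
    using H_nonneg by (simp add: F_def norm_mult G_def mult.commute)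
  have F_inner: "(\<integral>x. F x u \<partial>lborel)
      = complex_of_real (H u * (sqrt (2*pi) / \<sigma> * exp (- ((u - \<xi>)/\<sigma>)\<^sup>2 / 2)))" for u
  proof -
    have "(\<integral>x. F x u \<partial>lborel) = complex_of_real (H u)
        * (\<integral>x. complex_of_real (exp (- (\<sigma>*x)\<^sup>2 / 2)) * iexp (x * (u - \<xi>)) \<partial>lborel)"
      unfolding F_def G_def by (simp add: mult.assoc)
    also have "\<dots> = complex_of_real (H u * (sqrt (2*pi) / \<sigma> * exp (- ((u - \<xi>)/\<sigma>)\<^sup>2 / 2)))"
      by (subst gaussian_fourier_scaled[OF \<sigma>]) simp
    finally show ?thesis .
  qed
  \<comment> \<open>Fubini: integrating in \<open>x\<close> first turns the Gaussian into a heat kernel centred at \<open>\<xi>\<close>.\<close>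
  have "(\<integral>x. S x * complex_of_real (exp (- (\<sigma>*x)\<^sup>2/2)) * iexp (- (\<xi> * x)) \<partial>lborel)
      = (\<integral>u. (\<integral>x. F x u \<partial>lborel) \<partial>lborel)"
    using lborel_integral_swap[OF F_meas F_fin] S_F unfolding G_def by simp
  also have "\<dots> = complex_of_real (\<integral>u. H u * (sqrt (2*pi) / \<sigma> * exp (- ((u - \<xi>)/\<sigma>)\<^sup>2 / 2)) \<partial>lborel)"
    unfolding F_inner by (rule integral_complex_of_real)
  also have "\<dots> = complex_of_real (sqrt (2*pi) * (\<integral>z. H (\<xi> + \<sigma>*z) * exp (- z\<^sup>2/2) \<partial>lborel))"
    by (simp only: integral_gaussian_kernel_rescale[OF \<sigma>])
  finally show ?thesis .
qed

lemma gaussian_smoothing_tendsto: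
  fixes H :: "real \<Rightarrow> real" and \<sigma> :: "nat \<Rightarrow> real"
  assumes [measurable]: "H \<in> borel_measurable borel"
    and H_bound: "\<And>u. \<bar>H u\<bar> \<le> M" and H_cont: "isCont H \<xi>" and \<sigma>: "\<sigma> \<longlonglongrightarrow> 0"
  shows "(\<lambda>k. \<integral>z. H (\<xi> + \<sigma> k * z) * exp (- z\<^sup>2/2) \<partial>lborel) \<longlonglongrightarrow> sqrt (2*pi) * H \<xi>"
proof -
  have "(\<lambda>k. \<integral>z. H (\<xi> + \<sigma> k * z) * exp (- z\<^sup>2/2) \<partial>lborel) \<longlonglongrightarrow> (\<integral>z. H \<xi> * exp (- z\<^sup>2/2) \<partial>lborel)"
  proof (rule integral_dominated_convergence[where w="\<lambda>z. M * exp (- z\<^sup>2/2)"])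
    show "integrable lborel (\<lambda>z. M * exp (- z\<^sup>2/2))"
      using integrable_gaussian_scaled[of 1] by simp
    show "AE z in lborel. (\<lambda>k. H (\<xi> + \<sigma> k * z) * exp (- z\<^sup>2/2)) \<longlonglongrightarrow> H \<xi> * exp (- z\<^sup>2/2)"
    proof (intro AE_I2 tendsto_mult tendsto_const)
      fix z
      have "(\<lambda>k. \<xi> + \<sigma> k * z) \<longlonglongrightarrow> \<xi> + 0 * z"
        by (intro tendsto_intros \<sigma>)
      then show "(\<lambda>k. H (\<xi> + \<sigma> k * z)) \<longlonglongrightarrow> H \<xi>"
        using isCont_tendsto_compose[OF H_cont] by simp
    qed
    show "AE z in lborel. norm (H (\<xi> + \<sigma> k * z) * exp (- z\<^sup>2/2)) \<le> M * exp (- z\<^sup>2/2)" for k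
      using H_bound by (intro AE_I2) (simp add: abs_mult)
  qed measurable
  then show ?thesis using integral_gaussian by (simp add: mult.commute)
qed

lemma gaussian_regularized_fourier_tendsto:
  fixes H :: "real \<Rightarrow> real" and S :: "real \<Rightarrow> complex" and \<sigma> :: "nat \<Rightarrow> real"
  assumes H_meas: "H \<in> borel_measurable borel"
    and H_int: "integrable lborel H" and H_nonneg: "\<And>u. 0 \<le> H u" and H_bound: "\<And>u. H u \<le> M"
    and H_cont: "isCont H \<xi>"
    and S: "\<And>x. S x = (\<integral>u. complex_of_real (H u) * iexp (x * u) \<partial>lborel)"
    and \<sigma>_pos: "\<And>k. \<sigma> k > 0" and \<sigma>_lim: "\<sigma> \<longlonglongrightarrow> 0"
  shows "(\<lambda>k. \<integral>x. S x * complex_of_real (exp (- (\<sigma> k * x)\<^sup>2/2)) * iexp (- (\<xi> * x)) \<partial>lborel)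
    \<longlonglongrightarrow> complex_of_real (2*pi*H \<xi>)"
proof -
  have "\<bar>H u\<bar> \<le> M" for u using H_nonneg[of u] H_bound[of u] by simp
  then have "(\<lambda>k. sqrt (2*pi) * (\<integral>z. H (\<xi> + \<sigma> k * z) * exp (- z\<^sup>2/2) \<partial>lborel))
      \<longlonglongrightarrow> sqrt (2*pi) * (sqrt (2*pi) * H \<xi>)"
    by (intro tendsto_mult tendsto_const gaussian_smoothing_tendsto[OF H_meas _ H_cont \<sigma>_lim])
  then show ?thesis
    unfolding gaussian_regularized_fourier[OF H_meas H_int H_nonneg S \<sigma>_pos]
    by (intro tendsto_of_real) (simp add: algebra_simps)
qed

lemma gaussian_damping_tendsto_1:
  fixes \<sigma> :: "nat \<Rightarrow> real"
  assumes "\<sigma> \<longlonglongrightarrow> 0"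
  shows "(\<lambda>k. exp (- (\<sigma> k * x)\<^sup>2/2)) \<longlonglongrightarrow> 1"
proof -
  have "(\<lambda>k. exp (- (\<sigma> k * x)\<^sup>2/2)) \<longlonglongrightarrow> exp (- (0 * x)\<^sup>2/2)"
    by (intro tendsto_intros assms) simp
  then show ?thesis by simp
qed

lemma gaussian_damping_tendsto:
  fixes f :: "real \<Rightarrow> 'b::{banach, second_countable_topology}" and \<sigma> :: "nat \<Rightarrow> real"
  assumes f: "integrable lborel f" and \<sigma>: "\<sigma> \<longlonglongrightarrow> 0"
  shows "(\<lambda>k. \<integral>x. exp (- (\<sigma> k * x)\<^sup>2/2) *\<^sub>R f x \<partial>lborel) \<longlonglongrightarrow> (\<integral>x. f x \<partial>lborel)"
proof (rule integral_dominated_convergence[where w="\<lambda>x. norm (f x)"])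
  have [measurable]: "f \<in> borel_measurable lborel"
    using f by (rule borel_measurable_integrable)
  show "(\<lambda>x. exp (- (\<sigma> k * x)\<^sup>2/2) *\<^sub>R f x) \<in> borel_measurable lborel" for k
    by measurable
  show "AE x in lborel. (\<lambda>k. exp (- (\<sigma> k * x)\<^sup>2/2) *\<^sub>R f x) \<longlonglongrightarrow> f x"
    using tendsto_scaleR[OF gaussian_damping_tendsto_1[OF \<sigma>] tendsto_const] by (intro AE_I2) simp
  show "AE x in lborel. norm (exp (- (\<sigma> k * x)\<^sup>2/2) *\<^sub>R f x) \<le> norm (f x)" for k
    by (intro AE_I2) (auto intro!: mult_left_le_one_le)
qed (use f in auto)

text \<open>Fatou's lemma along Gaussian damping factors tending to \<open>1\<close>.\<close>

lemma integrable_of_gaussian_damped_convergent: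
  fixes s :: "real \<Rightarrow> real" and \<sigma> :: "nat \<Rightarrow> real"
  assumes [measurable]: "s \<in> borel_measurable borel" and s_nonneg: "\<And>x. 0 \<le> s x"
    and \<sigma>: "\<sigma> \<longlonglongrightarrow> 0"
    and damped_int: "\<And>k. integrable lborel (\<lambda>x. s x * exp (- (\<sigma> k * x)\<^sup>2/2))"
    and damped_lim: "(\<lambda>k. \<integral>x. s x * exp (- (\<sigma> k * x)\<^sup>2/2) \<partial>lborel) \<longlonglongrightarrow> L"
  shows "integrable lborel s"
proof (rule integrableI_bounded)
  define G where "G k x = exp (- (\<sigma> k * x)\<^sup>2/2)" for k x
  have "(\<integral>\<^sup>+x. ennreal (norm (s x)) \<partial>lborel) = (\<integral>\<^sup>+x. liminf (\<lambda>k. ennreal (s x * G k x)) \<partial>lborel)"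
  proof (intro nn_integral_cong)
    fix x
    have "(\<lambda>k. ennreal (s x * G k x)) \<longlonglongrightarrow> ennreal (s x * 1)"
      unfolding G_def by (intro tendsto_ennrealI tendsto_mult tendsto_const gaussian_damping_tendsto_1 \<sigma>)
    then show "ennreal (norm (s x)) = liminf (\<lambda>k. ennreal (s x * G k x))"
      using s_nonneg[of x] by (simp add: lim_imp_Liminf)
  qed
  also have "\<dots> \<le> liminf (\<lambda>k. \<integral>\<^sup>+x. ennreal (s x * G k x) \<partial>lborel)"
    by (rule nn_integral_liminf) (simp add: G_def)
  also have "\<dots> = liminf (\<lambda>k. ennreal (\<integral>x. s x * G k x \<partial>lborel))"
  proof -
    have "(\<integral>\<^sup>+x. ennreal (s x * G k x) \<partial>lborel) = ennreal (\<integral>x. s x * G k x \<partial>lborel)" for k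
      using damped_int[of k] s_nonneg unfolding G_def
      by (intro nn_integral_eq_integral) auto
    then show ?thesis by simp
  qed
  also have "\<dots> = ennreal L"
  proof (rule lim_imp_Liminf)
    show "(\<lambda>k. ennreal (\<integral>x. s x * G k x \<partial>lborel)) \<longlonglongrightarrow> ennreal L"
      using damped_lim unfolding G_def by (rule tendsto_ennrealI)
  qed simp
  also have "\<dots> < \<infinity>" by simp
  finally show "(\<integral>\<^sup>+x. ennreal (norm (s x)) \<partial>lborel) < \<infinity>" .
qed simp

lemma norm_fourier_le:
  fixes f :: "real \<Rightarrow> complex"
  shows "norm (\<integral>u. f u * iexp (x * u) \<partial>lborel) \<le> (\<integral>u. norm (f u) \<partial>lborel)"
  using integral_norm_bound[of lborel "\<lambda>u. f u * iexp (x * u)"] by (simp add: norm_mult)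

lemma fourier_inversion_nonneg:
  fixes H s :: "real \<Rightarrow> real"
  assumes H_meas[measurable]: "H \<in> borel_measurable borel"
    and H_int: "integrable lborel H" and H_nonneg: "\<And>u. 0 \<le> H u" and H_bound: "\<And>u. H u \<le> M"
    and H_cont: "\<And>u. isCont H u"
    and s: "\<And>x. complex_of_real (s x) = (\<integral>u. complex_of_real (H u) * iexp (x * u) \<partial>lborel)"
    and s_nonneg: "\<And>x. 0 \<le> s x"
  shows "integrable lborel s"
    and "(\<integral>x. complex_of_real (s x) * iexp (- (\<xi> * x)) \<partial>lborel) = complex_of_real (2*pi*H \<xi>)"
proof -
  have s_Re: "s = (\<lambda>x. Re (\<integral>u. complex_of_real (H u) * iexp (x * u) \<partial>lborel))"
    by (rule ext) (metis s Re_complex_of_real)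
  have s_meas[measurable]: "s \<in> borel_measurable borel"
    unfolding s_Re by measurable
  define \<sigma> where "\<sigma> k = inverse (real (Suc k))" for k
  have \<sigma>_pos: "\<sigma> k > 0" for k unfolding \<sigma>_def by simp
  have \<sigma>_lim: "\<sigma> \<longlonglongrightarrow> 0" unfolding \<sigma>_def by (rule LIMSEQ_inverse_real_of_nat)
  define G where "G k x = exp (- (\<sigma> k * x)\<^sup>2/2)" for k x
  have reg_lim: "(\<lambda>k. \<integral>x. complex_of_real (s x) * complex_of_real (G k x) * iexp (- (\<xi> * x)) \<partial>lborel)
      \<longlonglongrightarrow> complex_of_real (2*pi*H \<xi>)" for \<xi>
    unfolding G_def
    by (rule gaussian_regularized_fourier_tendsto[OF H_meas H_int H_nonneg H_bound H_cont s \<sigma>_pos \<sigma>_lim])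
  have s_le: "s x \<le> (\<integral>u. H u \<partial>lborel)" for x
    using norm_fourier_le[of "\<lambda>u. complex_of_real (H u)" x] s_nonneg[of x] H_nonneg
    unfolding s[symmetric] by simp
  have sG_int: "integrable lborel (\<lambda>x. s x * G k x)" for k
  proof (rule Bochner_Integration.integrable_bound[where f="\<lambda>x. (\<integral>u. H u \<partial>lborel) * G k x"])
    show "integrable lborel (\<lambda>x. (\<integral>u. H u \<partial>lborel) * G k x)"
      using integrable_gaussian_scaled[OF \<sigma>_pos] by (simp add: G_def)
    have "0 \<le> (\<integral>u. H u \<partial>lborel)"
      by (intro integral_nonneg_AE AE_I2 H_nonneg)
    then show "AE x in lborel. norm (s x * G k x) \<le> norm ((\<integral>u. H u \<partial>lborel) * G k x)"
      using s_le s_nonneg by (intro AE_I2) (simp add: G_def abs_mult mult_right_mono)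
  qed (simp add: G_def)
  have "(\<lambda>k. complex_of_real (\<integral>x. s x * G k x \<partial>lborel)) \<longlonglongrightarrow> complex_of_real (2*pi*H 0)"
    using reg_lim[of 0] by (simp flip: integral_complex_of_real)
  then show s_int: "integrable lborel s"
    unfolding G_def tendsto_of_real_iff
    by (rule integrable_of_gaussian_damped_convergent[OF s_meas s_nonneg \<sigma>_lim sG_int[unfolded G_def]])
  have "integrable lborel (\<lambda>x. complex_of_real (s x) * iexp (- (\<xi> * x)))"
    by (rule Bochner_Integration.integrable_bound[where f="\<lambda>x. complex_of_real (s x)"])
       (auto simp: norm_mult s_int intro!: AE_I2)
  from gaussian_damping_tendsto[OF this \<sigma>_lim]
  have "(\<lambda>k. \<integral>x. complex_of_real (s x) * complex_of_real (G k x) * iexp (- (\<xi> * x)) \<partial>lborel)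
      \<longlonglongrightarrow> (\<integral>x. complex_of_real (s x) * iexp (- (\<xi> * x)) \<partial>lborel)"
    by (simp add: G_def scaleR_conv_of_real mult_ac)
  with reg_lim show "(\<integral>x. complex_of_real (s x) * iexp (- (\<xi> * x)) \<partial>lborel) = complex_of_real (2*pi*H \<xi>)"
    using LIMSEQ_unique by blast
qed

lemma nn_integral_self_convolution_finite:
  fixes v :: "real \<Rightarrow> real"
  assumes [measurable]: "v \<in> borel_measurable borel"
    and v_int: "integrable lborel v" and v_nonneg: "\<And>r. 0 \<le> v r"
  shows "(\<integral>\<^sup>+r. \<integral>\<^sup>+u. ennreal (v r * v (u - r)) \<partial>lborel \<partial>lborel) < \<infinity>"
proof -
  have "(\<integral>\<^sup>+u. ennreal (v r * v (u - r)) \<partial>lborel) = (\<integral>\<^sup>+u. ennreal (v r * v u) \<partial>lborel)" for r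
    using nn_integral_real_affine[of "\<lambda>u. ennreal (v r * v u)" 1 "-r"] by simp
  then show ?thesis
    using nn_integral_product_finite[of v v] v_int v_nonneg by simp
qed

lemma integrable_self_convolution:
  fixes v :: "real \<Rightarrow> real"
  assumes [measurable]: "v \<in> borel_measurable borel"
    and "integrable lborel v" and v_nonneg: "\<And>r. 0 \<le> v r"
  shows "integrable lborel (\<lambda>u. \<integral>r. v r * v (u - r) \<partial>lborel)"
proof -
  have "integrable (lborel \<Otimes>\<^sub>M lborel) (\<lambda>(r,u). v r * v (u - r))"
    using nn_integral_self_convolution_finite[OF assms] v_nonneg
    by (intro integrable_lborel_pair_of_nn_iterated) simp_all
  from lborel_pair.integrable_snd[OF this] show ?thesis by simp
qed

lemma fourier_self_convolution:
  fixes v :: "real \<Rightarrow> real"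
  assumes [measurable]: "v \<in> borel_measurable borel"
    and v_int: "integrable lborel v" and v_nonneg: "\<And>r. 0 \<le> v r"
  shows "(\<integral>r. complex_of_real (v r) * iexp (x * r) \<partial>lborel)\<^sup>2
       = (\<integral>u. complex_of_real (\<integral>r. v r * v (u - r) \<partial>lborel) * iexp (x * u) \<partial>lborel)"
proof -
  define K where "K r u = complex_of_real (v r * v (u - r)) * iexp (x * u)" for r u
  have K_meas: "(\<lambda>(r,u). K r u) \<in> borel_measurable (lborel \<Otimes>\<^sub>M lborel)"
    unfolding K_def by measurable
  have K_fin: "(\<integral>\<^sup>+r. \<integral>\<^sup>+u. norm (K r u) \<partial>lborel \<partial>lborel) < \<infinity>"
    using nn_integral_self_convolution_finite[OF assms] v_nonneg by (simp add: K_def norm_mult)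
  define Fv where "Fv = (\<integral>r. complex_of_real (v r) * iexp (x * r) \<partial>lborel)"
  have K_inner: "complex_of_real (v r) * iexp (x * r) * Fv = (\<integral>u. K r u \<partial>lborel)" for r
  proof -
    have "complex_of_real (v r) * iexp (x * r) * Fv
        = (\<integral>q. complex_of_real (v r) * iexp (x * r) * (complex_of_real (v q) * iexp (x * q)) \<partial>lborel)"
      unfolding Fv_def by (rule integral_mult_right_zero[symmetric])
    also have "\<dots> = \<bar>1\<bar> *\<^sub>R (\<integral>u. complex_of_real (v r) * iexp (x * r)
                     * (complex_of_real (v (-r + 1*u)) * iexp (x * (-r + 1*u))) \<partial>lborel)"
      by (rule lborel_integral_real_affine) simp
    also have "\<dots> = (\<integral>u. K r u \<partial>lborel)"
    proof -
      have "iexp (x * r) * iexp (x * (-r + 1*u)) = iexp (x * u)" for u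
        by (metis iexp_add add.commute add_0 add_minus_cancel distrib_left mult_1)
      then show ?thesis unfolding K_def by (simp add: algebra_simps)
    qed
    finally show ?thesis .
  qed
  have "Fv\<^sup>2 = (\<integral>r. complex_of_real (v r) * iexp (x * r) * Fv \<partial>lborel)"
    unfolding power2_eq_square Fv_def[of ] by (rule integral_mult_left_zero[symmetric])
  also have "\<dots> = (\<integral>u. (\<integral>r. K r u \<partial>lborel) \<partial>lborel)"
    unfolding K_inner by (rule lborel_integral_swap[OF K_meas K_fin, symmetric])
  also have "\<dots> = (\<integral>u. complex_of_real (\<integral>r. v r * v (u - r) \<partial>lborel) * iexp (x * u) \<partial>lborel)"
    unfolding K_def integral_mult_left_zero integral_complex_of_real ..
  finally show ?thesis unfolding Fv_def .
qed

section \<open>The Poisson weight and its self-convolution\<close>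

definition poisson_weight :: "real \<Rightarrow> real \<Rightarrow> real" where
  "poisson_weight a r = (if \<bar>r\<bar> < 1/2 then (1 - 4*r\<^sup>2) powr (a - 1/2) else 0)"

definition weight_conv :: "real \<Rightarrow> real \<Rightarrow> real" where
  "weight_conv a u = (\<integral>r. poisson_weight a r * poisson_weight a (u - r) \<partial>lborel)"

lemma poisson_weight_nonneg: "0 \<le> poisson_weight a r"
  by (simp add: poisson_weight_def)

lemma poisson_weight_minus: "poisson_weight a (-r) = poisson_weight a r"
  by (simp add: poisson_weight_def)

lemma poisson_weight_measurable [measurable]: "poisson_weight a \<in> borel_measurable borel"
  unfolding poisson_weight_def[abs_def] by measurable

lemma integrable_Beta_indicator:
  assumes "p > 0" "q > 0"
  shows "integrable lborel (\<lambda>t::real. indicator {0..1} t * (t powr (p - 1) * (1-t) powr (q - 1)))"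
  using integrable_Beta[OF assms] unfolding set_integrable_def by simp

lemma poisson_weight_integrable:
  assumes "a > 0"
  shows "integrable lborel (poisson_weight a)"
proof -
  have shift: "4 powr (a - 1/2) * (indicator {0..1} t * (t powr (a + 1/2 - 1) * (1-t) powr (a + 1/2 - 1)))
      = poisson_weight a (-1/2 + 1 * t)" for t :: real
  proof (cases "0 < t \<and> t < 1")
    case True
    then have "\<bar>t - 1/2\<bar> < 1/2" by (auto split: abs_split)
    moreover have "1 - 4*(t - 1/2)\<^sup>2 = 4 * (t * (1 - t))" by (simp add: power2_eq_square algebra_simps)
    ultimately show ?thesis using True by (simp add: poisson_weight_def powr_mult indicator_def)
  qed (auto simp: poisson_weight_def indicator_def split: abs_split)
  have "integrable lborel (\<lambda>t. 4 powr (a - 1/2)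
      * (indicator {0..1} t * (t powr (a + 1/2 - 1) * (1-t) powr (a + 1/2 - 1))))"
    by (intro integrable_mult_right integrable_Beta_indicator) (use assms in simp_all)
  then show ?thesis
    unfolding shift by (subst (asm) lborel_integrable_real_affine_iff) auto
qed

lemma weight_conv_nonneg: "0 \<le> weight_conv a u"
  unfolding weight_conv_def by (intro integral_nonneg_AE AE_I2 mult_nonneg_nonneg poisson_weight_nonneg)

lemma weight_conv_eq_0: "\<bar>u\<bar> \<ge> 1 \<Longrightarrow> weight_conv a u = 0"
proof -
  assume u: "\<bar>u\<bar> \<ge> 1"
  have "\<not> (\<bar>r\<bar> < 1/2 \<and> \<bar>u - r\<bar> < 1/2)" for r using u by (auto split: abs_split)
  then have "(\<lambda>r. poisson_weight a r * poisson_weight a (u - r)) = (\<lambda>r. 0)"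
    by (auto simp: poisson_weight_def)
  then show ?thesis unfolding weight_conv_def by simp
qed

lemma weight_conv_minus: "weight_conv a (-u) = weight_conv a u"
proof -
  have "weight_conv a (-u) = \<bar>-1\<bar> *\<^sub>R (\<integral>q. poisson_weight a (0 + -1*q)
      * poisson_weight a (-u - (0 + -1*q)) \<partial>lborel)"
    unfolding weight_conv_def by (rule lborel_integral_real_affine) simp
  also have "(\<lambda>q. poisson_weight a (0 + -1*q) * poisson_weight a (-u - (0 + -1*q)))
      = (\<lambda>q. poisson_weight a q * poisson_weight a (u - q))"
    using poisson_weight_minus[of a] by (metis add_0 minus_diff_eq minus_mult_minus
        mult_1 mult_minus_left diff_minus_eq_add uminus_add_conv_diff)
  finally show ?thesis unfolding weight_conv_def by simp
qed

text \<open>Near the edge \<open>u = 1\<close> of the support, the substitution \<open>r = 1/2 - (1-u)t\<close> turns the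
  convolution into \<open>16 powr (a - 1/2) * (1-u) powr (2a)\<close> times an integral over \<open>t \<in> [0,1]\<close>
  that is continuous up to \<open>u = 1\<close>.\<close>

definition edge_factor :: "real \<Rightarrow> real \<Rightarrow> real" where
  "edge_factor u t = (1 - (1-u)*t) * (u + (1-u)*t)"

definition edge_integrand :: "real \<Rightarrow> real \<Rightarrow> real \<Rightarrow> real" where
  "edge_integrand a u t =
     indicator {0..1} t * (t powr (a - 1/2) * (1-t) powr (a - 1/2) * edge_factor u t powr (a - 1/2))"

definition edge_integral :: "real \<Rightarrow> real \<Rightarrow> real" where
  "edge_integral a u = (\<integral>t. edge_integrand a u t \<partial>lborel)"

lemma weight_conv_substitution:
  assumes u: "0 \<le> u" "u < 1"
  shows "poisson_weight a (1/2 + -(1-u)*t) * poisson_weight a (u - (1/2 + -(1-u)*t))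
       = 16 powr (a - 1/2) * (1-u) powr (2*(a - 1/2)) * edge_integrand a u t"
proof -
  define b where "b = a - 1/2"
  consider "t \<le> 0" | "0 < t \<and> t < 1" | "1 \<le> t" by linarith
  then show ?thesis
  proof cases
    case 1
    have "\<not> \<bar>1/2 + z\<bar> < 1/2" if "0 \<le> z" for z :: real using that by (auto split: abs_split)
    moreover have "0 \<le> -(1-u)*t" using 1 u by (simp add: mult_nonpos_nonpos)
    ultimately have "\<not> \<bar>1/2 + -(1-u)*t\<bar> < 1/2" by blast
    then have "poisson_weight a (1/2 + -(1-u)*t) = 0" by (simp add: poisson_weight_def)
    moreover have "edge_integrand a u t = 0"
      using 1 by (cases "t = 0") (auto simp: edge_integrand_def indicator_def)
    ultimately show ?thesis by simp
  next
    case 3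
    have "(1-u)*t \<ge> (1-u)*1" using 3 u by (intro mult_left_mono) auto
    then have "1/2 \<le> u - (1/2 + -(1-u)*t)" by (simp add: algebra_simps)
    then have "poisson_weight a (u - (1/2 + -(1-u)*t)) = 0" by (simp add: poisson_weight_def)
    moreover have "edge_integrand a u t = 0"
      using 3 by (cases "t = 1") (auto simp: edge_integrand_def indicator_def)
    ultimately show ?thesis by simp
  next
    case 2
    define w where "w = (1-u)*t"
    have w: "0 < w" "w < 1-u" using 2 u by (simp_all add: w_def)
    have eq: "1/2 + -(1-u)*t = 1/2 - w" unfolding w_def by (simp add: algebra_simps)
    have r1: "\<bar>1/2 + -(1-u)*t\<bar> < 1/2" and r2: "\<bar>u - (1/2 + -(1-u)*t)\<bar> < 1/2"
      unfolding eq using w u by (auto split: abs_split)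
    have e1: "1 - 4*(1/2 + -(1-u)*t)\<^sup>2 = 4 * (1-u) * t * (1 - (1-u)*t)"
      by (simp add: power2_eq_square algebra_simps)
    have e2: "1 - 4*(u - (1/2 + -(1-u)*t))\<^sup>2 = 4 * (1-u) * (1-t) * (u + (1-u)*t)"
      by (simp add: power2_eq_square algebra_simps)
    have "poisson_weight a (1/2 + -(1-u)*t) * poisson_weight a (u - (1/2 + -(1-u)*t))
        = ((4 * (1-u) * t * (1 - (1-u)*t)) * (4 * (1-u) * (1-t) * (u + (1-u)*t))) powr b"
      using r1 r2 by (simp only: poisson_weight_def if_True e1 e2 b_def powr_mult)
    also have "(4 * (1-u) * t * (1 - (1-u)*t)) * (4 * (1-u) * (1-t) * (u + (1-u)*t))
        = 16 * ((1-u)*(1-u)) * (t*(1-t)*edge_factor u t)"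
      by (simp add: edge_factor_def algebra_simps)
    also have "(16 * ((1-u)*(1-u)) * (t*(1-t)*edge_factor u t)) powr b
        = 16 powr b * (1-u) powr (2*b) * (t powr b * (1-t) powr b * edge_factor u t powr b)"
      by (simp only: powr_mult powr_add[symmetric] mult_2)
    finally show ?thesis using 2 by (simp add: b_def edge_integrand_def indicator_def)
  qed
qed

lemma weight_conv_edge:
  assumes u: "0 \<le> u" "u < 1"
  shows "weight_conv a u = 16 powr (a - 1/2) * (1-u) powr (2*a) * edge_integral a u"
proof -
  have pw: "(1-u) powr (2*a) = (1-u) * (1-u) powr (2*(a - 1/2))"
  proof -
    have "(1-u) powr (2*a) = (1-u) powr (1 + 2*(a - 1/2))" by simp
    also have "\<dots> = (1-u) * (1-u) powr (2*(a - 1/2))" by (subst powr_add) (use u in simp)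
    finally show ?thesis .
  qed
  have "weight_conv a u = \<bar>-(1-u)\<bar> *\<^sub>R (\<integral>t. poisson_weight a (1/2 + -(1-u)*t)
      * poisson_weight a (u - (1/2 + -(1-u)*t)) \<partial>lborel)"
    unfolding weight_conv_def by (rule lborel_integral_real_affine) (use u in simp)
  also have "\<dots> = (1-u) * (16 powr (a - 1/2) * (1-u) powr (2*(a - 1/2)) * edge_integral a u)"
    unfolding weight_conv_substitution[OF u] edge_integral_def using u
    by (simp del: integral_mult_right integral_mult_right_zero add: integral_mult_right_zero)
  also have "\<dots> = 16 powr (a - 1/2) * (1-u) powr (2*a) * edge_integral a u"
    unfolding pw by (simp only: mult_ac)
  finally show ?thesis .
qed

definition edge_majorant :: "real \<Rightarrow> real \<Rightarrow> real" where
  "edge_majorant a t = indicator {0..1} t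
     * (t powr (a - 1/2) * (1-t) powr (a - 1/2) + t powr (2*a - 1) * (1-t) powr (2*a - 1))"

lemma edge_integrand_nonneg: "0 \<le> edge_integrand a u t"
  unfolding edge_integrand_def by (simp add: indicator_def)

lemma edge_integrand_eq_0: "\<not> (0 < t \<and> t < 1) \<Longrightarrow> edge_integrand a u t = 0"
  unfolding edge_integrand_def by (cases "t = 0 \<or> t = 1") (auto simp: indicator_def)

lemma edge_integrand_measurable [measurable]: "edge_integrand a u \<in> borel_measurable borel"
  unfolding edge_integrand_def[abs_def] edge_factor_def by measurable

lemma edge_majorant_nonneg: "0 \<le> edge_majorant a t"
  unfolding edge_majorant_def by (simp add: indicator_def)

lemma edge_majorant_integrable:
  assumes "a > 0"
  shows "integrable lborel (edge_majorant a)"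
proof -
  have "integrable lborel (\<lambda>t::real. indicator {0..1} t * (t powr (a + 1/2 - 1) * (1-t) powr (a + 1/2 - 1))
      + indicator {0..1} t * (t powr (2*a - 1) * (1-t) powr (2*a - 1)))"
    using assms by (intro Bochner_Integration.integrable_add integrable_Beta_indicator) simp_all
  also have "(\<lambda>t::real. indicator {0..1} t * (t powr (a + 1/2 - 1) * (1-t) powr (a + 1/2 - 1))
      + indicator {0..1} t * (t powr (2*a - 1) * (1-t) powr (2*a - 1))) = edge_majorant a"
    by (rule ext) (simp add: edge_majorant_def distrib_left)
  finally show ?thesis .
qed

lemma edge_factor_bounds:
  assumes "0 \<le> u" "u \<le> 1" "0 \<le> t" "t \<le> 1"
  shows "t * (1-t) \<le> edge_factor u t" "edge_factor u t \<le> 1"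
proof -
  have f1: "1 - t \<le> 1 - (1-u)*t" "1 - (1-u)*t \<le> 1"
    using assms mult_left_le_one_le[of t "1-u"] by (simp_all add: mult.commute)
  have f2: "t \<le> u + (1-u)*t" using assms by (simp add: algebra_simps mult_left_le_one_le)
  have "(1-u)*t \<le> (1-u)*1" using assms by (intro mult_left_mono) auto
  then have f2': "u + (1-u)*t \<le> 1" by simp
  show "t * (1-t) \<le> edge_factor u t" unfolding edge_factor_def
    using mult_mono[OF f2 f1(1)] assms by (simp add: mult.commute)
  show "edge_factor u t \<le> 1" unfolding edge_factor_def
    using assms f1 f2 f2' by (intro mult_le_one) auto
qed

text \<open>With \<open>X = t(1-t) \<le> edge_factor u t \<le> 1\<close>, the power \<open>edge_factor u t powr (a - 1/2)\<close> is
  at most \<open>1\<close> if \<open>a \<ge> 1/2\<close> and at most \<open>X powr (a - 1/2)\<close> otherwise; the majorant covers both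
  cases.\<close>

lemma edge_integrand_le_majorant:
  assumes u: "0 \<le> u" "u \<le> 1"
  shows "edge_integrand a u t \<le> edge_majorant a t"
proof (cases "0 < t \<and> t < 1")
  case False
  then show ?thesis using edge_integrand_eq_0 edge_majorant_nonneg by simp
next
  case True
  define b where "b = a - 1/2"
  define X where "X = t * (1-t)"
  have X0: "0 < X" using True by (simp add: X_def)
  have QX: "X \<le> edge_factor u t" "edge_factor u t \<le> 1"
    using edge_factor_bounds[OF u, of t] True by (auto simp: X_def)
  have tt: "t powr b * (1-t) powr b = X powr b" unfolding X_def by (rule powr_mult[symmetric])
  have tt2: "t powr (2*a - 1) * (1-t) powr (2*a - 1) = X powr b * X powr b"
  proof -
    have "t powr (2*a - 1) * (1-t) powr (2*a - 1) = X powr (b + b)"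
      unfolding X_def b_def by (simp add: powr_mult[symmetric])
    also have "\<dots> = X powr b * X powr b" by (rule powr_add)
    finally show ?thesis .
  qed
  have Xb0: "0 \<le> X powr b" by simp
  have "edge_integrand a u t = X powr b * edge_factor u t powr b"
    using True tt by (simp add: edge_integrand_def b_def)
  also have "\<dots> \<le> X powr b + X powr b * X powr b"
  proof (cases "b \<ge> 0")
    case True
    have "edge_factor u t powr b \<le> 1 powr b" using QX X0 True by (intro powr_mono2) auto
    then have "X powr b * edge_factor u t powr b \<le> X powr b * 1" using Xb0 by (intro mult_left_mono) auto
    then show ?thesis using mult_nonneg_nonneg[OF Xb0 Xb0] Xb0 by linarith
  next
    case False
    have "edge_factor u t powr b \<le> X powr b" using QX X0 False by (intro powr_mono2') auto
    then have "X powr b * edge_factor u t powr b \<le> X powr b * X powr b" using Xb0 by (intro mult_left_mono) auto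
    then show ?thesis using mult_nonneg_nonneg[OF Xb0 Xb0] Xb0 by linarith
  qed
  also have "\<dots> = edge_majorant a t" using True tt tt2 by (simp add: edge_majorant_def b_def)
  finally show ?thesis .
qed

lemma edge_integral_nonneg: "0 \<le> edge_integral a u"
  unfolding edge_integral_def by (intro integral_nonneg_AE AE_I2 edge_integrand_nonneg)

lemma edge_integral_le:
  assumes "a > 0" "0 \<le> u" "u \<le> 1"
  shows "edge_integral a u \<le> (\<integral>t. edge_majorant a t \<partial>lborel)"
  unfolding edge_integral_def
proof (rule integral_mono)
  show "integrable lborel (edge_integrand a u)"
    by (rule Bochner_Integration.integrable_bound[OF edge_majorant_integrable[OF assms(1)]])
       (use edge_integrand_le_majorant[OF assms(2,3)] edge_integrand_nonneg edge_majorant_nonneg in auto)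
qed (use edge_majorant_integrable[OF assms(1)] edge_integrand_le_majorant[OF assms(2,3)] in auto)

lemma continuous_on_edge_integral:
  assumes a: "a > 0"
  shows "continuous_on {0..1} (edge_integral a)"
proof (rule continuous_on_sequentiallyI)
  fix x :: "nat \<Rightarrow> real" and u
  assume x: "\<forall>n. x n \<in> {0..1}" and u: "u \<in> {0..1}" and lim: "x \<longlonglongrightarrow> u"
  show "(\<lambda>n. edge_integral a (x n)) \<longlonglongrightarrow> edge_integral a u"
    unfolding edge_integral_def
  proof (rule integral_dominated_convergence[where w="edge_majorant a"])
    show "AE t in lborel. norm (edge_integrand a (x n) t) \<le> edge_majorant a t" for n
      using edge_integrand_le_majorant[of "x n" a] x edge_integrand_nonneg by (intro AE_I2) auto
    show "AE t in lborel. (\<lambda>n. edge_integrand a (x n) t) \<longlonglongrightarrow> edge_integrand a u t"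
    proof (rule AE_I2)
      fix t :: real
      show "(\<lambda>n. edge_integrand a (x n) t) \<longlonglongrightarrow> edge_integrand a u t"
      proof (cases "0 < t \<and> t < 1")
        case False
        then show ?thesis using edge_integrand_eq_0 by simp
      next
        case True
        have "t * (1-t) \<le> edge_factor u t" using edge_factor_bounds(1)[of u t] u True by simp
        moreover have "0 < t * (1-t)" using True by simp
        ultimately have pos: "0 < edge_factor u t" by linarith
        have "(\<lambda>n. edge_factor (x n) t) \<longlonglongrightarrow> edge_factor u t"
          unfolding edge_factor_def by (intro tendsto_intros lim)
        then have "(\<lambda>n. edge_factor (x n) t powr (a - 1/2)) \<longlonglongrightarrow> edge_factor u t powr (a - 1/2)"
          using pos by (intro tendsto_powr tendsto_const) auto
        then show ?thesis unfolding edge_integrand_def by (intro tendsto_mult tendsto_const)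
      qed
    qed
  qed (use edge_majorant_integrable[OF a] in simp_all)
qed

lemma edge_integral_at_1:
  assumes "a > 0"
  shows "edge_integral a 1 = Beta (a + 1/2) (a + 1/2)"
proof -
  have "edge_integral a 1
      = (\<integral>t. indicator {0..1} t *\<^sub>R (t powr (a + 1/2 - 1) * (1-t) powr (a + 1/2 - 1)) \<partial>lborel)"
    unfolding edge_integral_def edge_integrand_def edge_factor_def by simp
  also have "\<dots> = integral {0..1} (\<lambda>t. t powr (a + 1/2 - 1) * (1-t) powr (a + 1/2 - 1))"
    using set_borel_integral_eq_integral(2)[OF integrable_Beta[of "a + 1/2" "a + 1/2"]] assms
    by (simp add: set_lebesgue_integral_def)
  also have "\<dots> = Beta (a + 1/2) (a + 1/2)"
    by (rule integral_unique[OF has_integral_Beta_real]) (use assms in simp)+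
  finally show ?thesis .
qed

lemma weight_conv_eq:
  "weight_conv a u = 16 powr (a - 1/2) * (max 0 (1 - \<bar>u\<bar>)) powr (2*a) * edge_integral a (min 1 \<bar>u\<bar>)"
proof (cases "\<bar>u\<bar> < 1")
  case False
  then show ?thesis by (simp add: weight_conv_eq_0)
next
  case True
  have "weight_conv a u = weight_conv a \<bar>u\<bar>"
    by (cases "u \<ge> 0") (auto simp: weight_conv_minus[of a u, symmetric])
  also have "\<dots> = 16 powr (a - 1/2) * (1 - \<bar>u\<bar>) powr (2*a) * edge_integral a \<bar>u\<bar>"
    by (rule weight_conv_edge) (use True in auto)
  finally show ?thesis using True by simp
qed

lemma continuous_weight_conv:
  assumes "a > 0"
  shows "continuous_on UNIV (weight_conv a)"
proof -
  have "continuous_on UNIV (\<lambda>u. edge_integral a (min 1 \<bar>u\<bar>))"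
    by (rule continuous_on_compose2[OF continuous_on_edge_integral[OF assms]])
       (auto intro!: continuous_intros)
  moreover have "continuous_on UNIV (\<lambda>u::real. (max 0 (1 - \<bar>u\<bar>)) powr (2*a))"
    using assms by (intro continuous_on_powr' continuous_intros) auto
  ultimately show ?thesis
    unfolding weight_conv_eq[abs_def] by (intro continuous_on_mult continuous_on_const)
qed

lemma weight_conv_le:
  assumes "a > 0" and "0 \<le> w" and "max 0 (1 - \<bar>u\<bar>) \<le> w"
  shows "weight_conv a u \<le> 16 powr (a - 1/2) * (\<integral>t. edge_majorant a t \<partial>lborel) * w powr (2*a)"
proof -
  have "(max 0 (1 - \<bar>u\<bar>)) powr (2*a) \<le> w powr (2*a)"
    using assms by (intro powr_mono2) auto
  moreover have "edge_integral a (min 1 \<bar>u\<bar>) \<le> (\<integral>t. edge_majorant a t \<partial>lborel)"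
    by (rule edge_integral_le[OF assms(1)]) auto
  ultimately have "(max 0 (1 - \<bar>u\<bar>)) powr (2*a) * edge_integral a (min 1 \<bar>u\<bar>)
      \<le> w powr (2*a) * (\<integral>t. edge_majorant a t \<partial>lborel)"
    by (intro mult_mono edge_integral_nonneg) auto
  then show ?thesis
    unfolding weight_conv_eq mult.assoc[of "16 powr (a - 1/2)"] by (simp add: mult_ac)
qed

section \<open>Poisson's integral for \<open>J\<^sub>a\<close>\<close>

definition poisson_integral :: "real \<Rightarrow> real \<Rightarrow> real" where
  "poisson_integral a x = (\<integral>r. poisson_weight a r * cos (x * r) \<partial>lborel)"

lemma poisson_integral_abs: "poisson_integral a \<bar>x\<bar> = poisson_integral a x"
  unfolding poisson_integral_def by (cases "x \<ge> 0") (auto simp: abs_if)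

lemma poisson_integral_measurable [measurable]: "poisson_integral a \<in> borel_measurable borel"
  unfolding poisson_integral_def[abs_def] by measurable

lemma poisson_integral_complex:
  assumes a: "a > 0"
  shows "complex_of_real (poisson_integral a x)
    = (\<integral>r. complex_of_real (poisson_weight a r) * iexp (x * r) \<partial>lborel)"
proof -
  have int_cos: "integrable lborel (\<lambda>r. poisson_weight a r * cos (x * r))"
    and int_sin: "integrable lborel (\<lambda>r. poisson_weight a r * sin (x * r))"
    by (auto intro!: Bochner_Integration.integrable_bound[OF poisson_weight_integrable[OF a]] AE_I2
             simp: abs_mult poisson_weight_nonneg mult_left_le)
  have sin_0: "(\<integral>r. poisson_weight a r * sin (x * r) \<partial>lborel) = 0"
  proof -
    have "(\<integral>r. poisson_weight a r * sin (x * r) \<partial>lborel)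
        = \<bar>-1\<bar> *\<^sub>R (\<integral>r. poisson_weight a (0 + -1*r) * sin (x * (0 + -1*r)) \<partial>lborel)"
      by (rule lborel_integral_real_affine) simp
    also have "\<dots> = - (\<integral>r. poisson_weight a r * sin (x * r) \<partial>lborel)"
      by (simp add: poisson_weight_minus)
    finally show ?thesis by simp
  qed
  have "(\<integral>r. complex_of_real (poisson_weight a r) * iexp (x * r) \<partial>lborel)
      = (\<integral>r. complex_of_real (poisson_weight a r * cos (x * r))
             + \<i> * complex_of_real (poisson_weight a r * sin (x * r)) \<partial>lborel)"
    by (intro Bochner_Integration.integral_cong refl) (simp add: complex_eq_iff Re_exp Im_exp)
  also have "\<dots> = complex_of_real (\<integral>r. poisson_weight a r * cos (x * r) \<partial>lborel)
      + \<i> * complex_of_real (\<integral>r. poisson_weight a r * sin (x * r) \<partial>lborel)"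
  proof -
    have "integrable lborel (\<lambda>r. complex_of_real (poisson_weight a r * cos (x * r)))"
      by (rule integrable_of_real[OF int_cos])
    moreover have "integrable lborel (\<lambda>r. \<i> * complex_of_real (poisson_weight a r * sin (x * r)))"
      by (rule integrable_mult_right[OF integrable_of_real[OF int_sin]])
    ultimately have "(\<integral>r. complex_of_real (poisson_weight a r * cos (x * r))
             + \<i> * complex_of_real (poisson_weight a r * sin (x * r)) \<partial>lborel)
        = (\<integral>r. complex_of_real (poisson_weight a r * cos (x * r)) \<partial>lborel)
          + (\<integral>r. \<i> * complex_of_real (poisson_weight a r * sin (x * r)) \<partial>lborel)"
      by (rule Bochner_Integration.integral_add)
    then show ?thesis unfolding integral_mult_right_zero integral_complex_of_real .
  qed
  finally show ?thesis using sin_0 by (simp add: poisson_integral_def)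
qed

lemma weight_conv_integrable: "a > 0 \<Longrightarrow> integrable lborel (weight_conv a)"
  using integrable_self_convolution[OF poisson_weight_measurable poisson_weight_integrable
      poisson_weight_nonneg]
  unfolding weight_conv_def[abs_def] by simp

lemma poisson_integral_square_fourier:
  assumes a: "a > 0"
  shows "integrable lborel (\<lambda>x. (poisson_integral a x)\<^sup>2)"
    and "(\<integral>x. complex_of_real ((poisson_integral a x)\<^sup>2) * iexp (- (\<xi> * x)) \<partial>lborel)
      = complex_of_real (2*pi * weight_conv a \<xi>)"
proof -
  have square: "complex_of_real ((poisson_integral a x)\<^sup>2)
      = (\<integral>u. complex_of_real (weight_conv a u) * iexp (x * u) \<partial>lborel)" for x
    using fourier_self_convolution[OF poisson_weight_measurable poisson_weight_integrable[OF a]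
        poisson_weight_nonneg, of x]
    unfolding poisson_integral_complex[OF a, symmetric] weight_conv_def[symmetric] by simp
  have bound: "weight_conv a u \<le> 16 powr (a - 1/2) * (\<integral>t. edge_majorant a t \<partial>lborel)" for u
    using weight_conv_le[OF a, of 1 u] by simp
  have cont: "isCont (weight_conv a) u" for u
    using continuous_weight_conv[OF a] by (simp add: continuous_on_eq_continuous_at)
  note inversion = fourier_inversion_nonneg[OF borel_measurable_continuous_onI[OF continuous_weight_conv[OF a]]
      weight_conv_integrable[OF a] weight_conv_nonneg bound cont square]
  show "integrable lborel (\<lambda>x. (poisson_integral a x)\<^sup>2)"
    using inversion(1) by simp
  show "(\<integral>x. complex_of_real ((poisson_integral a x)\<^sup>2) * iexp (- (\<xi> * x)) \<partial>lborel)
      = complex_of_real (2*pi * weight_conv a \<xi>)"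
    using inversion(2) by simp
qed

lemma Beta_real_pos: "x > 0 \<Longrightarrow> y > 0 \<Longrightarrow> Beta x y > (0::real)"
  by (simp add: Beta_def)

lemma nn_integral_Beta:
  assumes "p > 0" "q > 0"
  shows "(\<integral>\<^sup>+x. ennreal (x powr (p - 1) * (1-x) powr (q - 1) * indicator {0..1} x) \<partial>lborel)
    = ennreal (Beta p q)"
proof -
  have "((\<lambda>x. x powr (p - 1) * (1-x) powr (q - 1)) has_integral Beta p q) {0..1}"
    by (rule has_integral_Beta_real) (use assms in auto)
  then have "((\<lambda>x. if x \<in> {0..1} then x powr (p - 1) * (1-x) powr (q - 1) else 0)
      has_integral Beta p q) UNIV"
    by (subst has_integral_restrict_UNIV)
  also have "(\<lambda>x. if x \<in> {0..1} then x powr (p - 1) * (1-x) powr (q - 1) else 0)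
      = (\<lambda>x. x powr (p - 1) * (1-x) powr (q - 1) * indicator {0..1} x)"
    by (auto simp: indicator_def fun_eq_iff)
  finally show ?thesis
    by (rule nn_integral_has_integral_lborel[rotated 2]) auto
qed

lemma poisson_weight_moment_substitution:
  assumes "r \<noteq> 0"
  shows "(4 * r\<^sup>2) powr (real m + 1/2 - 1) * (1 - 4 * r\<^sup>2) powr (a + 1/2 - 1) * (8 * r)
      * indicator {0..1/2} r
    = 4^(m+1) * (poisson_weight a r * r^(2*m) * indicator {0..1/2} r)"
proof (cases "0 < r \<and> r < 1/2")
  case True
  have sq: "sqrt (4 * r\<^sup>2) = 2 * r" using True by (simp add: real_sqrt_mult)
  have "(4 * r\<^sup>2) powr (real m + 1/2 - 1) = (4 * r\<^sup>2) powr (real m) / (4 * r\<^sup>2) powr (1/2)"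
    by (simp add: powr_diff[symmetric])
  also have "\<dots> = (4 * r\<^sup>2)^m / (2 * r)"
    using True by (simp add: powr_realpow powr_half_sqrt sq)
  finally have "(4 * r\<^sup>2) powr (real m + 1/2 - 1) * (1 - 4 * r\<^sup>2) powr (a + 1/2 - 1) * (8 * r)
      = (4 * r\<^sup>2)^m / (2 * r) * (1 - 4*r\<^sup>2) powr (a - 1/2) * (8 * r)"
    by simp
  also have "\<dots> = 4^(m+1) * ((1 - 4*r\<^sup>2) powr (a - 1/2) * r^(2*m))"
    using True by (simp add: power_mult_distrib power_mult field_simps power2_eq_square)
  finally show ?thesis using True by (simp add: poisson_weight_def indicator_def)
next
  case outside: False
  show ?thesis
  proof (cases "r = 1/2")
    case True
    show ?thesis unfolding True by (simp add: power2_eq_square poisson_weight_def)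
  next
    case False
    with outside assms show ?thesis by (auto simp: indicator_def)
  qed
qed

text \<open>The substitution \<open>x = 4r\<^sup>2\<close> turns the half-line moments of the Poisson weight into Beta
  integrals.\<close>

lemma poisson_weight_moment_half:
  assumes a: "a > 0"
  shows "(\<integral>\<^sup>+r. ennreal (poisson_weight a r * r^(2*m)) * indicator {0..1/2} r \<partial>lborel)
       = ennreal (Beta (real m + 1/2) (a + 1/2) / 4^(m+1))"
proof -
  define F where "F x = x powr (real m + 1/2 - 1) * (1-x) powr (a + 1/2 - 1)" for x :: real
  define g where "g r = 4 * r\<^sup>2" for r :: real
  have [measurable]: "F \<in> borel_measurable borel" unfolding F_def by measurable
  have "(\<integral>\<^sup>+x. F x * indicator {g 0..g (1/2)} x \<partial>lborel)
      = (\<integral>\<^sup>+r. F (g r) * (8 * r) * indicator {0..1/2} r \<partial>lborel)"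
  proof (rule nn_integral_substitution)
    show "(g has_real_derivative 8 * r) (at r)" for r
      unfolding g_def by (auto intro!: derivative_eq_intros)
    show "set_borel_measurable borel {g 0..g (1/2)} F"
      unfolding set_borel_measurable_def by measurable
  qed (auto intro!: continuous_intros)
  moreover have "g 0 = 0" "g (1/2) = 1" by (auto simp: g_def power2_eq_square)
  moreover have "(\<integral>\<^sup>+x. F x * indicator {0..1} x \<partial>lborel) = ennreal (Beta (real m + 1/2) (a + 1/2))"
    unfolding F_def by (rule nn_integral_Beta) (use a in auto)
  ultimately have Beta_eq: "ennreal (Beta (real m + 1/2) (a + 1/2))
      = (\<integral>\<^sup>+r. F (g r) * (8 * r) * indicator {0..1/2} r \<partial>lborel)"
    by simp
  have "ennreal (Beta (real m + 1/2) (a + 1/2))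
      = ennreal (4^(m+1)) * (\<integral>\<^sup>+r. ennreal (poisson_weight a r * r^(2*m)) * indicator {0..1/2} r \<partial>lborel)"
  proof -
    have "AE r in lborel. ennreal (F (g r) * (8 * r) * indicator {0..1/2} r)
        = ennreal (4^(m+1)) * (ennreal (poisson_weight a r * r^(2*m)) * indicator {0..1/2} r)"
      using AE_lborel_singleton[of 0]
    proof eventually_elim
      case (elim r)
      show ?case unfolding F_def g_def poisson_weight_moment_substitution[OF elim]
        by (simp add: ennreal_mult' poisson_weight_nonneg indicator_def)
    qed
    then show ?thesis
      unfolding Beta_eq by (subst nn_integral_cmult[symmetric]) (auto intro!: nn_integral_cong_AE)
  qed
  moreover have "0 \<le> Beta (real m + 1/2) (a + 1/2)"
    using Beta_real_pos[of "real m + 1/2" "a + 1/2"] a by simp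
  ultimately show ?thesis
    by (simp add: divide_ennreal[symmetric] ennreal_mult_divide_eq mult.commute[of "ennreal _"])
qed

lemma poisson_weight_moment:
  assumes a: "a > 0"
  shows "has_bochner_integral lborel (\<lambda>r. poisson_weight a r * r^(2*m))
    (Beta (real m + 1/2) (a + 1/2) / (2 * 4^m))"
proof (rule has_bochner_integral_nn_integral)
  define f where "f r = poisson_weight a r * r^(2*m)" for r
  have B: "0 \<le> Beta (real m + 1/2) (a + 1/2)"
    using Beta_real_pos[of "real m + 1/2" "a + 1/2"] a by simp
  then show "0 \<le> Beta (real m + 1/2) (a + 1/2) / (2 * 4^m)" by simp
  show "AE x in lborel. 0 \<le> poisson_weight a x * x^(2*m)"
    by (intro AE_I2 mult_nonneg_nonneg poisson_weight_nonneg) (simp add: power_mult)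
  have f_minus: "f (-r) = f r" for r by (simp add: f_def poisson_weight_minus power_mult)
  have "(\<integral>\<^sup>+r. ennreal (f r) \<partial>lborel)
      = (\<integral>\<^sup>+r. ennreal (f r) * indicator {0..1/2} r + ennreal (f (-r)) * indicator {0..1/2} (-r) \<partial>lborel)"
  proof (rule nn_integral_cong_AE)
    show "AE r in lborel. ennreal (f r)
        = ennreal (f r) * indicator {0..1/2} r + ennreal (f (-r)) * indicator {0..1/2} (-r)"
      using AE_lborel_singleton[of 0]
    proof eventually_elim
      case (elim r)
      have "\<not> \<bar>r\<bar> < 1/2 \<Longrightarrow> f r = 0" by (simp add: f_def poisson_weight_def)
      then show ?case using elim f_minus[of r] by (auto simp: indicator_def)
    qed
  qed
  also have "\<dots> = (\<integral>\<^sup>+r. ennreal (f r) * indicator {0..1/2} r \<partial>lborel)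
      + (\<integral>\<^sup>+r. ennreal (f (-r)) * indicator {0..1/2} (-r) \<partial>lborel)"
    by (rule nn_integral_add) (auto simp: f_def)
  also have "(\<integral>\<^sup>+r. ennreal (f (-r)) * indicator {0..1/2} (-r) \<partial>lborel)
      = (\<integral>\<^sup>+r. ennreal (f r) * indicator {0..1/2} r \<partial>lborel)"
    using nn_integral_real_affine[of "\<lambda>r. ennreal (f r) * indicator {0..1/2} r" "-1" 0]
    by (simp add: f_def)
  also have "(\<integral>\<^sup>+r. ennreal (f r) * indicator {0..1/2} r \<partial>lborel)
      = ennreal (Beta (real m + 1/2) (a + 1/2) / 4^(m+1))"
    unfolding f_def by (rule poisson_weight_moment_half[OF a])
  also have "\<dots> + \<dots> = ennreal (Beta (real m + 1/2) (a + 1/2) / (2 * 4^m))"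
    using B by (simp add: ennreal_plus[symmetric] del: ennreal_plus)
  finally show "(\<integral>\<^sup>+r. ennreal (poisson_weight a r * r^(2*m)) \<partial>lborel)
      = ennreal (Beta (real m + 1/2) (a + 1/2) / (2 * 4^m))"
    unfolding f_def .
qed simp

lemma Gamma_nat_plus_half: "Gamma (real m + 1/2) = fact (2*m) * sqrt pi / (4^m * fact m)"
proof (induction m)
  case 0
  then show ?case by (simp add: Gamma_one_half_real)
next
  case (Suc m)
  have "Gamma (real (Suc m) + 1/2) = Gamma ((real m + 1/2) + 1)" by (simp add: algebra_simps)
  also have "\<dots> = (real m + 1/2) * Gamma (real m + 1/2)"
    by (rule Gamma_plus1) (auto elim!: nonpos_Ints_cases)
  also have "\<dots> = (real m + 1/2) * (fact (2*m) * sqrt pi / (4^m * fact m))" using Suc by simp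
  also have "\<dots> = fact (2 * Suc m) * sqrt pi / (4^Suc m * fact (Suc m))"
  proof -
    have e0: "2 * Suc m = Suc (Suc (2*m))" by simp
    have e1: "(fact (2 * Suc m) :: real) = (real m + 1) * (2 * ((2*real m + 1) * fact (2*m)))"
      unfolding e0 fact_Suc by (simp add: algebra_simps)
    have e2: "(fact (Suc m) :: real) = (real m + 1) * fact m" by (simp add: fact_Suc algebra_simps)
    have nz: "real m + 1 \<noteq> 0" by linarith
    have "fact (2 * Suc m) * sqrt pi / (4^Suc m * fact (Suc m))
        = ((real m + 1) * (2 * ((2*real m + 1) * fact (2*m)) * sqrt pi)) / ((real m + 1) * (4^Suc m * fact m))"
      unfolding e1 e2 by (simp only: mult_ac)
    also have "\<dots> = (2 * ((2*real m + 1) * fact (2*m)) * sqrt pi) / (4^Suc m * fact m)"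
      by (rule mult_divide_mult_cancel_left[OF nz])
    also have "\<dots> = (real m + 1/2) * (fact (2*m) * sqrt pi / (4^m * fact m))"
      by (simp add: field_simps)
    finally show ?thesis by simp
  qed
  finally show ?case .
qed

lemma summable_even_exp: "summable (\<lambda>m. (y::real)^(2*m) / fact (2*m))"
proof (rule summable_comparison_test[where g="\<lambda>m. inverse (fact m) * (y\<^sup>2)^m"])
  show "summable (\<lambda>m. inverse (fact m) * (y\<^sup>2)^m)" by (rule summable_exp)
  show "\<exists>N. \<forall>n\<ge>N. norm (y^(2*n) / fact (2*n)) \<le> inverse (fact n) * (y\<^sup>2)^n"
  proof (intro exI allI impI)
    fix n :: nat
    have y0: "0 \<le> (y\<^sup>2)^n" by simp
    have f: "(fact n :: real) \<le> fact (2*n)" by (rule fact_mono) simp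
    have "y^(2*n) / fact (2*n) \<le> (y\<^sup>2)^n / fact n"
      unfolding power_mult by (rule divide_left_mono[OF f y0]) simp
    then show "norm (y^(2*n) / fact (2*n)) \<le> inverse (fact n) * (y\<^sup>2)^n"
      by (simp add: power_mult field_simps)
  qed
qed

lemma poisson_weight_moment_le: "poisson_weight a r * r^(2*m) \<le> poisson_weight a r"
proof (cases "\<bar>r\<bar> < 1/2")
  case True
  then have "r\<^sup>2 \<le> 1" by (simp add: abs_square_le_1)
  then have "r^(2*m) \<le> 1" by (simp add: power_mult power_le_one)
  then show ?thesis using poisson_weight_nonneg[of a r] by (simp add: mult_left_le)
qed (simp add: poisson_weight_def)

text \<open>Termwise integration of the cosine series against the Poisson weight.\<close>

lemma poisson_integral_sums:
  assumes a: "a > 0"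
  shows "(\<lambda>m. (-1)^m / fact (2*m) * x^(2*m) * (Beta (real m + 1/2) (a + 1/2) / (2 * 4^m)))
    sums poisson_integral a x"
proof -
  define f where "f m r = (-1)^m / fact (2*m) * x^(2*m) * (poisson_weight a r * r^(2*m))" for m r
  have mom_int: "integrable lborel (\<lambda>r. poisson_weight a r * r^(2*m))" for m
    using poisson_weight_moment[OF a, of m] by (simp add: has_bochner_integral_iff)
  have mom_eq: "(\<integral>r. poisson_weight a r * r^(2*m) \<partial>lborel) = Beta (real m + 1/2) (a + 1/2) / (2 * 4^m)" for m
    using poisson_weight_moment[OF a, of m] by (simp add: has_bochner_integral_iff)
  have norm_f: "norm (f m r) = x^(2*m) / fact (2*m) * (poisson_weight a r * r^(2*m))" for m r
    by (simp add: f_def abs_mult poisson_weight_nonneg power_mult power_abs)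
  have "(\<lambda>m. integral\<^sup>L lborel (f m)) sums (\<integral>r. (\<Sum>m. f m r) \<partial>lborel)"
  proof (rule sums_integral)
    show "integrable lborel (f m)" for m
      unfolding f_def[abs_def] by (intro integrable_mult_right mom_int)
    show "AE r in lborel. summable (\<lambda>m. norm (f m r))"
    proof (rule AE_I2)
      fix r
      have "summable (\<lambda>m. poisson_weight a r * ((x*r)^(2*m) / fact (2*m)))"
        by (intro summable_mult summable_even_exp)
      moreover have "norm (f m r) = poisson_weight a r * ((x*r)^(2*m) / fact (2*m))" for m
        unfolding norm_f by (simp add: power_mult_distrib)
      ultimately show "summable (\<lambda>m. norm (f m r))" by simp
    qed
    show "summable (\<lambda>m. \<integral>r. norm (f m r) \<partial>lborel)"
    proof (rule summable_comparison_test[where g="\<lambda>m. x^(2*m) / fact (2*m) * (\<integral>r. poisson_weight a r \<partial>lborel)"])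
      show "\<exists>N. \<forall>n\<ge>N. norm (\<integral>r. norm (f n r) \<partial>lborel)
          \<le> x^(2*n) / fact (2*n) * (\<integral>r. poisson_weight a r \<partial>lborel)"
      proof (intro exI allI impI)
        fix n :: nat
        have "(\<integral>r. norm (f n r) \<partial>lborel) = x^(2*n) / fact (2*n) * (\<integral>r. poisson_weight a r * r^(2*n) \<partial>lborel)"
          unfolding norm_f by simp
        also have "\<dots> \<le> x^(2*n) / fact (2*n) * (\<integral>r. poisson_weight a r \<partial>lborel)"
          by (intro mult_left_mono integral_mono poisson_weight_moment_le mom_int poisson_weight_integrable[OF a])
             (simp add: power_mult)
        finally show "norm (\<integral>r. norm (f n r) \<partial>lborel) \<le> x^(2*n) / fact (2*n) * (\<integral>r. poisson_weight a r \<partial>lborel)"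
          by simp
      qed
    qed (intro summable_mult2 summable_even_exp)
  qed
  moreover have "(\<lambda>m. f m r) sums (poisson_weight a r * cos (x * r))" for r
  proof -
    have "f m r = poisson_weight a r * ((-1)^m / fact (2*m) * (x*r)^(2*m))" for m
      by (simp add: f_def power_mult_distrib)
    then show ?thesis by (simp only:) (rule sums_mult[OF cos_paired])
  qed
  then have "(\<integral>r. (\<Sum>m. f m r) \<partial>lborel) = poisson_integral a x"
    unfolding poisson_integral_def by (simp add: sums_iff)
  moreover have "integral\<^sup>L lborel (f m)
      = (-1)^m / fact (2*m) * x^(2*m) * (Beta (real m + 1/2) (a + 1/2) / (2 * 4^m))" for m
    unfolding f_def by (simp add: mom_eq)
  ultimately show ?thesis by simp
qed

definition poisson_const :: "real \<Rightarrow> real" where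
  "poisson_const a = 2 * 4 powr (-a) / (Gamma (a + 1/2) * sqrt pi)"

lemma besselJ_poisson_integral:
  assumes a: "a > 0" and x: "x > 0"
  shows "besselJ a (x/2) = poisson_const a * x powr a * poisson_integral a x"
proof -
  define P where "P = poisson_const a * x powr a"
  have term_eq: "P * ((-1)^m / fact (2*m) * x^(2*m) * (Beta (real m + 1/2) (a + 1/2) / (2 * 4^m)))
      = (-1)^m / (fact m * Gamma (real m + a + 1)) * (x / 2 / 2) powr (2 * real m + a)" for m
  proof -
    have "Gamma (real m + 1/2 + (a + 1/2)) = Gamma (real m + a + 1)" by (simp add: algebra_simps)
    then have B: "Beta (real m + 1/2) (a + 1/2)
        = fact (2*m) * sqrt pi / (4^m * fact m) * Gamma (a + 1/2) / Gamma (real m + a + 1)"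
      unfolding Beta_def Gamma_nat_plus_half by simp
    have "(x / 2 / 2) powr (2 * real m + a) = (x/4) powr (real (2*m)) * (x/4) powr a"
      by (simp add: powr_add)
    also have "(x/4) powr (real (2*m)) = (x/4)^(2*m)"
      using x by (rule powr_realpow[of "x/4", simplified])
    also have "(x/4)^(2*m) = x^(2*m) / (4^m * 4^m)"
      by (simp only: power_divide mult_2 power_add) simp
    also have "(x/4) powr a = x powr a / 4 powr a"
      using x by (simp add: powr_divide)
    finally have x4: "(x / 2 / 2) powr (2 * real m + a) = x^(2*m) / (4^m * 4^m) * (x powr a / 4 powr a)" .
    have "Gamma (a + 1/2) > 0" "Gamma (real m + a + 1) > 0" using a by simp_all
    then show ?thesis
      unfolding P_def poisson_const_def B x4 powr_minus_divide by (simp add: field_simps)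
  qed
  have "besselJ a (x/2)
      = (\<Sum>m. P * ((-1)^m / fact (2*m) * x^(2*m) * (Beta (real m + 1/2) (a + 1/2) / (2 * 4^m))))"
    unfolding besselJ_def term_eq ..
  also have "\<dots> = P * poisson_integral a x"
    using sums_mult[OF poisson_integral_sums[OF a], of P] by (simp add: sums_iff)
  finally show ?thesis unfolding P_def .
qed

section \<open>The Fourier transform of \<open>\<phi>\<^sub>a\<close> near the edge of its support\<close>

lemma phi_eq_poisson_integral:
  assumes a: "a > 0" and x: "x \<noteq> 0"
  shows "phi a x = (poisson_const a)\<^sup>2 * (poisson_integral a x)\<^sup>2"
proof -
  have ax: "\<bar>x\<bar> > 0" using x by simp
  have "phi a x = (besselJ a (\<bar>x\<bar> / 2))\<^sup>2 / \<bar>x\<bar> powr (2 * a)"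
    using x by (simp add: phi_def)
  also have "besselJ a (\<bar>x\<bar> / 2) = poisson_const a * \<bar>x\<bar> powr a * poisson_integral a x"
    using besselJ_poisson_integral[OF a ax] by (simp add: poisson_integral_abs)
  also have "\<bar>x\<bar> powr (2 * a) = \<bar>x\<bar> powr a * \<bar>x\<bar> powr a"
    by (simp add: powr_add[symmetric])
  finally show ?thesis using ax by (simp add: power2_eq_square field_simps)
qed

lemma fourier_phi:
  assumes a: "a > 0"
  shows "fourier (phi a) \<xi> = complex_of_real (sqrt (2*pi) * (poisson_const a)\<^sup>2 * weight_conv a \<xi>)"
proof -
  have phi_meas: "phi a \<in> borel_measurable borel"
  proof -
    have "phi a = (\<lambda>x. if x = 0 then phi a 0 else (poisson_const a)\<^sup>2 * (poisson_integral a x)\<^sup>2)"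
      by (rule ext) (simp add: phi_eq_poisson_integral[OF a])
    also have "\<dots> \<in> borel_measurable borel" by measurable
    finally show ?thesis .
  qed
  have "(\<integral>x. complex_of_real (phi a x) * exp (- \<i> * complex_of_real (\<xi> * x)) \<partial>lborel)
      = (\<integral>x. complex_of_real ((poisson_const a)\<^sup>2)
             * (complex_of_real ((poisson_integral a x)\<^sup>2) * iexp (- (\<xi> * x))) \<partial>lborel)"
    using AE_lborel_singleton[of 0] phi_meas
    by (intro integral_cong_AE) (auto elim!: eventually_mono simp: phi_eq_poisson_integral[OF a])
  also have "\<dots> = complex_of_real ((poisson_const a)\<^sup>2 * (2*pi * weight_conv a \<xi>))"
    by (simp only: integral_mult_right_zero poisson_integral_square_fourier(2)[OF a] of_real_mult)
  finally have "fourier (phi a) \<xi>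
      = complex_of_real (1 / sqrt (2*pi) * ((poisson_const a)\<^sup>2 * (2*pi * weight_conv a \<xi>)))"
    unfolding fourier_def by simp
  moreover have "1 / sqrt (2*pi) * ((poisson_const a)\<^sup>2 * (2*pi * weight_conv a \<xi>))
      = sqrt (2*pi) * (poisson_const a)\<^sup>2 * weight_conv a \<xi>"
    using real_sqrt_mult_self[of "2*pi"] by (simp add: field_simps)
  ultimately show ?thesis by (simp only:)
qed

lemma edge_constant:
  assumes "a > 0"
  shows "sqrt (2*pi) * (poisson_const a)\<^sup>2 * 16 powr (a - 1/2) * Beta (a + 1/2) (a + 1/2)
    = sqrt (2/pi) / Gamma (2*a + 1)"
proof -
  have "(16::real) powr (a - 1/2) = (4 powr 2) powr (a - 1/2)" by simp
  also have "\<dots> = 4 powr (2*a - 1)" by (subst powr_powr) (simp add: algebra_simps)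
  finally have "(4 powr (-a))\<^sup>2 * 16 powr (a - 1/2) = 4 powr (-a) * 4 powr (-a) * (4::real) powr (2*a - 1)"
    by (simp add: power2_eq_square)
  also have "\<dots> = 4 powr (-a + -a + (2*a - 1))" by (simp only: powr_add)
  also have "\<dots> = 4 powr (-1)" by simp
  finally have powers: "(4 powr (-a))\<^sup>2 * 16 powr (a - 1/2) = 1/4"
    by (simp add: powr_minus_divide)
  have roots: "sqrt (2*pi) / pi = sqrt (2/pi)"
    by (simp add: real_sqrt_mult real_sqrt_divide field_simps)
  have G: "Gamma (a + 1/2) > 0" "Gamma (2*a + 1) > 0" using assms by simp_all
  have "(poisson_const a)\<^sup>2 = 4 * (4 powr (-a))\<^sup>2 / ((Gamma (a + 1/2))\<^sup>2 * pi)"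
    unfolding poisson_const_def by (simp add: power_mult_distrib power_divide)
  then have "sqrt (2*pi) * (poisson_const a)\<^sup>2 * 16 powr (a - 1/2) * Beta (a + 1/2) (a + 1/2)
      = sqrt (2*pi) * (4 * ((4 powr (-a))\<^sup>2 * 16 powr (a - 1/2)))
        / ((Gamma (a + 1/2))\<^sup>2 * pi) * Beta (a + 1/2) (a + 1/2)"
    by (simp add: mult_ac)
  also have "\<dots> = sqrt (2*pi) / pi * ((Gamma (a + 1/2))\<^sup>2 / (Gamma (a + 1/2))\<^sup>2) / Gamma (2*a + 1)"
    unfolding powers Beta_def by (simp add: power2_eq_square)
  also have "\<dots> = sqrt (2/pi) / Gamma (2*a + 1)"
    using G unfolding roots by simp
  finally show ?thesis .
qed

lemma fourier_phi_edge:
  assumes a: "a > 0" and "0 < y" "y \<le> R"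
  shows "complex_of_real (R powr (2*a)) * fourier (phi a) (1 - y/R) = complex_of_real
    (sqrt (2*pi) * (poisson_const a)\<^sup>2 * 16 powr (a - 1/2) * y powr (2*a) * edge_integral a (1 - y/R))"
proof -
  have R: "R > 0" using assms by simp
  have "R powr (2*a) * (sqrt (2*pi) * (poisson_const a)\<^sup>2 * weight_conv a (1 - y/R))
      = sqrt (2*pi) * (poisson_const a)\<^sup>2 * 16 powr (a - 1/2)
        * (R powr (2*a) * (y/R) powr (2*a)) * edge_integral a (1 - y/R)"
    using weight_conv_edge[of "1 - y/R" a] assms by (simp add: field_simps)
  also have "R powr (2*a) * (y/R) powr (2*a) = y powr (2*a)"
    using R by (simp add: powr_mult[symmetric])
  finally show ?thesis
    unfolding fourier_phi[OF a] of_real_mult[symmetric] by (simp only:)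
qed

lemma fourier_phi_edge_bound:
  assumes a: "a > 0" and R: "R > 0" and y: "y > 0"
  shows "R powr (2*a) * Re (fourier (phi a) (1 - y/R))
    \<le> sqrt (2*pi) * (poisson_const a)\<^sup>2 * 16 powr (a - 1/2) * (\<integral>t. edge_majorant a t \<partial>lborel)
      * y powr (2*a)"
proof -
  have W: "weight_conv a (1 - y/R)
      \<le> 16 powr (a - 1/2) * (\<integral>t. edge_majorant a t \<partial>lborel) * (y/R) powr (2*a)"
    by (rule weight_conv_le[OF a]) (use R y in \<open>auto simp: abs_if field_simps\<close>)
  have "R powr (2*a) * weight_conv a (1 - y/R)
      \<le> 16 powr (a - 1/2) * (\<integral>t. edge_majorant a t \<partial>lborel) * (R powr (2*a) * (y/R) powr (2*a))"
    using mult_left_mono[OF W, of "R powr (2*a)"] by (simp add: mult_ac)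
  also have "R powr (2*a) * (y/R) powr (2*a) = y powr (2*a)"
    using R by (simp add: powr_mult[symmetric])
  finally have "sqrt (2*pi) * (poisson_const a)\<^sup>2 * (R powr (2*a) * weight_conv a (1 - y/R))
      \<le> sqrt (2*pi) * (poisson_const a)\<^sup>2
        * (16 powr (a - 1/2) * (\<integral>t. edge_majorant a t \<partial>lborel) * y powr (2*a))"
    by (rule mult_left_mono) simp
  then show ?thesis
    unfolding fourier_phi[OF a] by (simp add: mult_ac)
qed

lemma fourier_phi_edge_tendsto:
  assumes a: "a > 0" and y: "y > 0"
  shows "((\<lambda>R. complex_of_real (R powr (2*a)) * fourier (phi a) (1 - y/R))
    \<longlongrightarrow> complex_of_real (sqrt (2/pi) / Gamma (2*a + 1) * y powr (2*a))) at_top"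
proof -
  define K where "K = sqrt (2*pi) * (poisson_const a)\<^sup>2 * 16 powr (a - 1/2) * y powr (2*a)"
  have "((\<lambda>R. 1 - y/R) \<longlongrightarrow> 1 - 0) at_top"
    by (intro tendsto_intros tendsto_divide_0[OF tendsto_const]
        filterlim_at_top_imp_at_infinity[OF filterlim_ident])
  then have lim: "((\<lambda>R. 1 - y/R) \<longlongrightarrow> 1) at_top" by simp
  have "eventually (\<lambda>R. 1 - y/R \<in> {0..1}) at_top"
    using eventually_ge_at_top[of y] by eventually_elim (use y in \<open>auto simp: field_simps\<close>)
  then have "((\<lambda>R. edge_integral a (1 - y/R)) \<longlongrightarrow> edge_integral a 1) at_top"
    by (intro continuous_on_tendsto_compose[OF continuous_on_edge_integral[OF a] lim]) auto
  then have "((\<lambda>R. complex_of_real (K * edge_integral a (1 - y/R)))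
      \<longlongrightarrow> complex_of_real (K * edge_integral a 1)) at_top"
    by (intro tendsto_of_real tendsto_mult tendsto_const)
  also have "K * edge_integral a 1 = sqrt (2/pi) / Gamma (2*a + 1) * y powr (2*a)"
    unfolding K_def edge_integral_at_1[OF a] edge_constant[OF a, symmetric] by (simp add: mult_ac)
  finally show ?thesis
  proof (rule Lim_transform_eventually)
    show "eventually (\<lambda>R. complex_of_real (K * edge_integral a (1 - y/R))
        = complex_of_real (R powr (2*a)) * fourier (phi a) (1 - y/R)) at_top"
      using eventually_ge_at_top[of y]
      by eventually_elim (unfold K_def, rule fourier_phi_edge[OF a y, symmetric])
  qed
qed

lemma continuous_on_edge_limit_constant:
  "continuous_on {0<..} (\<lambda>a::real. sqrt (2/pi) / Gamma (2*a + 1))"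
proof -
  have "continuous_on {0<..} (\<lambda>a::real. Gamma (2*a + 1))"
    by (rule continuous_on_compose2[OF continuous_on_Gamma[of "{1<..}"]])
       (auto intro!: continuous_intros elim!: nonpos_Ints_cases)
  moreover have "Gamma (2*a + 1) > 0" if "a \<in> {0<..}" for a :: real
    by (rule Gamma_real_pos) (use that in simp)
  ultimately show ?thesis
    by (intro continuous_intros) (auto simp: less_imp_neq[symmetric])
qed

theorem mainTheorem4:
  shows "\<exists>c d :: real \<Rightarrow> real.
    continuous_on {0<..<1} c \<and>
    (\<forall>a \<in> {0<..<1::real}.
       c a > 0 \<and> d a > 0 \<and>
       (\<forall>R y. R > 0 \<longrightarrow> y > 0 \<longrightarrow>
          R powr (2 * a) * Re (fourier (phi a) (1 - y / R)) \<le> d a * y powr (2 * a)) \<and>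
       (\<forall>y. y > 0 \<longrightarrow>
          ((\<lambda>R. complex_of_real (R powr (2 * a)) * fourier (phi a) (1 - y / R))
             \<longlongrightarrow> complex_of_real (c a * y powr (2 * a))) at_top))"
proof (intro exI conjI ballI allI impI)
  define c where "c a = sqrt (2/pi) / Gamma (2*a + 1)" for a :: real
  define d where "d a = sqrt (2*pi) * (poisson_const a)\<^sup>2 * 16 powr (a - 1/2)
    * (\<integral>t. edge_majorant a t \<partial>lborel) + 1" for a
  show "continuous_on {0<..<1} c"
    unfolding c_def by (rule continuous_on_subset[OF continuous_on_edge_limit_constant]) auto
  fix a :: real
  assume "a \<in> {0<..<1}"
  then have a: "a > 0" by simp
  show "c a > 0" using a by (simp add: c_def)
  have "0 \<le> (\<integral>t. edge_majorant a t \<partial>lborel)"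
    by (intro integral_nonneg_AE AE_I2 edge_majorant_nonneg)
  then show "d a > 0" by (simp add: d_def add_nonneg_pos)
  show "R powr (2*a) * Re (fourier (phi a) (1 - y/R)) \<le> d a * y powr (2*a)" if "R > 0" "y > 0" for R y
    using fourier_phi_edge_bound[OF a that] powr_ge_zero[of y "2*a"]
    unfolding d_def distrib_right by linarith
  show "((\<lambda>R. complex_of_real (R powr (2*a)) * fourier (phi a) (1 - y/R))
      \<longlongrightarrow> complex_of_real (c a * y powr (2*a))) at_top" if "y > 0" for y
    using fourier_phi_edge_tendsto[OF a that] by (simp add: c_def)
qed

end
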